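(* Let $\{\alpha_{i,j,k}\}_{1\le i,j,k\le d}$ be real numbers invariant under all permutations of the three indices, and suppose the system $\frac{\partial\varphi}{\partial t_i}=\sum_{j,k}\alpha_{i,j,k}t_j\frac{\partial\varphi}{\partial t_k}+t_i\varphi$ ($i=1,\dots,d$) has a $C^2$ solution $\varphi$ on a neighborhood of $\mathbf 0\in\mathbb R^d$ with $\varphi(\mathbf 0)\neq0$. Let $A_k:=(\alpha_{k,r,s})_{1\le r,s\le d}$, $C_{i,j}:=A_iA_j-A_jA_i$, and $F(\mathbf t):=\sum_{i,j,k}\alpha_{i,j,k}t_it_jt_k$. Then for all $i,j\in\{1,\dots,d\}$ and every $\xi\in\mathbb R^d$, the function $s\mapsto F(\mathbf t(s,\xi))$ is constant on $\mathbb R$, where $\mathbf t(s,\xi):=\exp(sC_{i,j})\xi$ is the solution of $\frac{d}{ds}\mathbf t(s,\xi)=C_{i,j}\mathbf t(s,\xi)$, $\mathbf t(0,\xi)=\xi$. *)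

theory Defs
  imports "HOL-Analysis.Analysis"
begin

text \<open>Vectors in R^d are modelled as real^'n for a finite index type 'n (d = CARD('n)).\<close>

definition has_partial :: "(real^'n \<Rightarrow> real) \<Rightarrow> 'n \<Rightarrow> real^'n \<Rightarrow> real \<Rightarrow> bool" where
  "has_partial f i x D \<longleftrightarrow> ((\<lambda>h. f (x + h *\<^sub>R axis i 1)) has_real_derivative D) (at 0)"

definition C2_on :: "(real^'n) set \<Rightarrow> (real^'n \<Rightarrow> real) \<Rightarrow> bool" where
  "C2_on U f \<longleftrightarrow> open U \<and> continuous_on U f \<and>
     (\<exists>g h. (\<forall>i. \<forall>x\<in>U. has_partial f i x (g i x)) \<and> (\<forall>i. continuous_on U (g i)) \<and>
            (\<forall>i j. \<forall>x\<in>U. has_partial (g i) j x (h i j x)) \<and> (\<forall>i j. continuous_on U (h i j)))"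

definition partial :: "(real^'n \<Rightarrow> real) \<Rightarrow> 'n \<Rightarrow> real^'n \<Rightarrow> real" where
  "partial f i x = (THE D. has_partial f i x D)"

definition coeff_mat :: "('n \<Rightarrow> 'n \<Rightarrow> 'n \<Rightarrow> real) \<Rightarrow> 'n \<Rightarrow> real^'n^'n" where
  "coeff_mat \<alpha> k = (\<chi> r s. \<alpha> k r s)"

definition commut :: "real^'n^'n \<Rightarrow> real^'n^'n \<Rightarrow> real^'n^'n" where
  "commut A B = A ** B - B ** A"

definition mat_pow :: "real^'n^'n \<Rightarrow> nat \<Rightarrow> real^'n^'n" where
  "mat_pow A n = ((\<lambda>M. A ** M) ^^ n) (mat 1)"

definition mat_exp :: "real^'n^'n \<Rightarrow> real^'n^'n" where
  "mat_exp A = (\<Sum>n. (1 / fact n) *\<^sub>R mat_pow A n)"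

definition cubic_form :: "('n::finite \<Rightarrow> 'n \<Rightarrow> 'n \<Rightarrow> real) \<Rightarrow> real^'n \<Rightarrow> real" where
  "cubic_form \<alpha> t = (\<Sum>i\<in>UNIV. \<Sum>j\<in>UNIV. \<Sum>k\<in>UNIV. \<alpha> i j k * t$i * t$j * t$k)"

end

theory Submission
  imports Defs
begin

text \<open>
  Write \<open>M(x)\<close> for the matrix with entries \<open>\<Sum>\<^sub>j \<alpha>\<^sub>i\<^sub>j\<^sub>k x\<^sub>j\<close>, so that the system reads
  \<open>\<nabla>\<phi>(t) = M(t) \<nabla>\<phi>(t) + \<phi>(t) t\<close>. Differentiating once more expresses the Hessian through
  \<open>M(\<nabla>\<phi>(t))\<close>, and the symmetry of the Hessian then forces \<open>M(\<nabla>\<phi>(t))\<close> to commute with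
  \<open>M(t)\<close>. Substituting the system twice into \<open>\<nabla>\<phi>(e u)\<close> and letting \<open>e \<rightarrow> 0\<close>, where
  \<open>\<nabla>\<phi> \<rightarrow> \<nabla>\<phi>(0) = 0\<close> and \<open>\<phi> \<rightarrow> \<phi>(0) \<noteq> 0\<close>, leaves \<open>[M(M(u) u), M(u)] = 0\<close> for every \<open>u\<close>.
  By total symmetry the \<open>(i, j)\<close> entry of this commutator is \<open>\<langle>M(u) u, C\<^sub>i\<^sub>j u\<rangle>\<close>, a third of
  the derivative of \<open>F\<close> at \<open>u\<close> in direction \<open>C\<^sub>i\<^sub>j u\<close>; so \<open>F\<close> is constant along the flow of
  \<open>C\<^sub>i\<^sub>j\<close>.
\<close>

lemma matrix_diff_ldistrib: "(A :: 'a::ring_1^'n^'m) ** (B - C) = A ** B - A ** C"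
  by (simp add: matrix_matrix_mult_def vec_eq_iff algebra_simps sum_subtractf)

lemma matrix_add_rdistrib: "((A :: 'a::semiring_1^'n^'m) + B) ** C = A ** C + B ** C"
  by (simp add: matrix_matrix_mult_def vec_eq_iff algebra_simps sum.distrib)

lemma matrix_diff_rdistrib: "((A :: 'a::ring_1^'n^'m) - B) ** C = A ** C - B ** C"
  by (simp add: matrix_matrix_mult_def vec_eq_iff algebra_simps sum_subtractf)

lemma transpose_add: "transpose (A + B) = transpose A + transpose (B :: 'a::semiring_1^'n^'m)"
  by (simp add: transpose_def vec_eq_iff)

lemma transpose_diff: "transpose (A - B) = transpose A - transpose (B :: 'a::ring_1^'n^'m)"
  by (simp add: transpose_def vec_eq_iff)

lemma commut_add_left: "commut (A + B) C = commut A C + commut B C"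
  by (simp add: commut_def matrix_add_rdistrib matrix_add_ldistrib)

lemma commut_scaleR_left: "commut (c *\<^sub>R A) B = c *\<^sub>R commut A B"
  by (simp add: commut_def matrix_scalar_ac scalar_matrix_assoc[symmetric] scaleR_diff_right)

lemma commut_scaleR_right: "commut A (c *\<^sub>R B) = c *\<^sub>R commut A B"
  by (simp add: commut_def matrix_scalar_ac scalar_matrix_assoc[symmetric] scaleR_diff_right)

lemma commut_self [simp]: "commut A A = 0"
  by (simp add: commut_def)

definition outer :: "real^'n \<Rightarrow> real^'m \<Rightarrow> real^'m^'n" where
  "outer a b = (\<chi> i j. a$i * b$j)"

lemma transpose_outer: "transpose (outer a b) = outer b a"
  by (simp add: transpose_def outer_def vec_eq_iff)

lemma outer_mult: "outer a b ** A = outer a (b v* A)"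
  by (simp add: outer_def matrix_matrix_mult_def vector_matrix_mult_def vec_eq_iff
      sum_distrib_left algebra_simps)

text \<open>Sandwiching the first equation between \<open>mat 1 - M\<close> and using the second one on
  the right gives \<open>(mat 1 - M) ** H ** (mat 1 - M) = N - N ** M + f *\<^sub>R (mat 1 - M) +
  f *\<^sub>R outer t t\<close>; the left side and all terms but \<open>N ** M\<close> are symmetric.\<close>

lemma commut_eq_0_if_symmetric:
  fixes M N H :: "real^'n^'n" and g t :: "real^'n"
  assumes M: "transpose M = M" and N: "transpose N = N" and H: "transpose H = H"
    and H_eq: "H = N + M ** H + f *\<^sub>R mat 1 + outer t g"
    and g_eq: "g = M *v g + f *\<^sub>R t"
  shows "commut N M = 0"
proof -
  define S where "S = (mat 1 - M) ** H ** (mat 1 - M)"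
  have "transpose S = S"
    by (simp add: S_def matrix_transpose_mul transpose_diff M H matrix_mul_assoc)
  have H': "(mat 1 - M) ** H = N + f *\<^sub>R mat 1 + outer t g"
    using H_eq by (simp add: matrix_diff_rdistrib algebra_simps)
  have g': "g v* (mat 1 - M) = f *\<^sub>R t"
  proof -
    have "g v* M = M *v g"
      by (metis M vector_transpose_matrix)
    then have "g v* (mat 1 - M) = g - M *v g"
      by (simp add: vector_matrix_mult_diff_rdistrib)
    then show ?thesis
      using g_eq by (simp add: algebra_simps)
  qed
  have "S = (N + f *\<^sub>R mat 1 + outer t g) ** (mat 1 - M)"
    by (simp add: S_def H')
  also have "\<dots> = N ** (mat 1 - M) + f *\<^sub>R (mat 1 - M) + outer t (g v* (mat 1 - M))"
    by (simp add: matrix_add_rdistrib outer_mult scalar_matrix_assoc[symmetric])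
  also have "\<dots> = N - N ** M + f *\<^sub>R (mat 1 - M) + f *\<^sub>R outer t t"
    by (simp add: g' matrix_diff_ldistrib outer_def vec_eq_iff)
  finally have "S = N - N ** M + f *\<^sub>R (mat 1 - M) + f *\<^sub>R outer t t" .
  moreover have "transpose (N - N ** M + f *\<^sub>R (mat 1 - M) + f *\<^sub>R outer t t)
      = N - M ** N + f *\<^sub>R (mat 1 - M) + f *\<^sub>R outer t t"
    by (simp add: transpose_add transpose_diff matrix_transpose_mul transpose_scalar
        transpose_outer M N)
  ultimately show ?thesis
    using \<open>transpose S = S\<close> by (simp add: commut_def)
qed

section \<open>Symmetry of second partial derivatives\<close>

lemma partial_eq:
  assumes "has_partial f i x D"
  shows "partial f i x = D"
  unfolding partial_def
  by (rule the_equality) (use assms in \<open>auto simp: has_partial_def intro: DERIV_unique\<close>)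

lemma has_partial_shift:
  assumes "has_partial f i (x + a *\<^sub>R axis i 1) D"
  shows "DERIV (\<lambda>b. f (x + b *\<^sub>R axis i 1)) a :> D"
proof -
  have "(\<lambda>h. f ((x + a *\<^sub>R axis i 1) + h *\<^sub>R axis i 1)) = (\<lambda>h. f (x + (h + a) *\<^sub>R axis i 1))"
    by (simp add: algebra_simps)
  then show ?thesis
    using assms DERIV_shift[of "\<lambda>b. f (x + b *\<^sub>R axis i 1)" D 0 a]
    by (simp add: has_partial_def)
qed

lemma second_difference_mvt:
  fixes f :: "real^'n \<Rightarrow> real" and i p :: 'n
  defines "e\<^sub>i \<equiv> axis i 1" and "e\<^sub>p \<equiv> axis p 1"
  assumes r: "r > 0"
    and box: "\<And>a b. \<bar>a\<bar> \<le> r \<Longrightarrow> \<bar>b\<bar> \<le> r \<Longrightarrow> x + a *\<^sub>R e\<^sub>i + b *\<^sub>R e\<^sub>p \<in> U"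
    and f: "\<And>y. y \<in> U \<Longrightarrow> has_partial f i y (f\<^sub>i y)"
    and f\<^sub>i: "\<And>y. y \<in> U \<Longrightarrow> has_partial f\<^sub>i p y (f\<^sub>i\<^sub>p y)"
  obtains c d where "\<bar>c\<bar> \<le> r" "\<bar>d\<bar> \<le> r"
    "f (x + r *\<^sub>R e\<^sub>i + r *\<^sub>R e\<^sub>p) - f (x + r *\<^sub>R e\<^sub>p) - f (x + r *\<^sub>R e\<^sub>i) + f x
       = r\<^sup>2 * f\<^sub>i\<^sub>p (x + c *\<^sub>R e\<^sub>i + d *\<^sub>R e\<^sub>p)"
proof -
  have df: "DERIV (\<lambda>s. f (x + s *\<^sub>R e\<^sub>i + b *\<^sub>R e\<^sub>p)) a :> f\<^sub>i (x + a *\<^sub>R e\<^sub>i + b *\<^sub>R e\<^sub>p)"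
    if "\<bar>a\<bar> \<le> r" "\<bar>b\<bar> \<le> r" for a b
  proof -
    have "has_partial f i ((x + b *\<^sub>R e\<^sub>p) + a *\<^sub>R e\<^sub>i) (f\<^sub>i (x + a *\<^sub>R e\<^sub>i + b *\<^sub>R e\<^sub>p))"
      using f[OF box[OF that]] by (simp add: algebra_simps)
    from has_partial_shift[OF this[unfolded e\<^sub>i_def]] show ?thesis
      by (simp add: e\<^sub>i_def algebra_simps)
  qed
  have df\<^sub>i: "DERIV (\<lambda>s. f\<^sub>i (x + a *\<^sub>R e\<^sub>i + s *\<^sub>R e\<^sub>p)) b :> f\<^sub>i\<^sub>p (x + a *\<^sub>R e\<^sub>i + b *\<^sub>R e\<^sub>p)"
    if "\<bar>a\<bar> \<le> r" "\<bar>b\<bar> \<le> r" for a b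
    using has_partial_shift[of f\<^sub>i p "x + a *\<^sub>R e\<^sub>i" b] f\<^sub>i[OF box[OF that]] by (simp add: e\<^sub>p_def)
  define G where "G a = f (x + a *\<^sub>R e\<^sub>i + r *\<^sub>R e\<^sub>p) - f (x + a *\<^sub>R e\<^sub>i)" for a
  have "DERIV G a :> f\<^sub>i (x + a *\<^sub>R e\<^sub>i + r *\<^sub>R e\<^sub>p) - f\<^sub>i (x + a *\<^sub>R e\<^sub>i)" if "0 \<le> a" "a \<le> r" for a
    using df[of a r] df[of a 0] that r unfolding G_def by (intro DERIV_diff) auto
  from MVT2[OF r this] obtain c where c: "0 < c" "c < r"
    "G r - G 0 = r * (f\<^sub>i (x + c *\<^sub>R e\<^sub>i + r *\<^sub>R e\<^sub>p) - f\<^sub>i (x + c *\<^sub>R e\<^sub>i))"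
    by auto
  have "DERIV (\<lambda>s. f\<^sub>i (x + c *\<^sub>R e\<^sub>i + s *\<^sub>R e\<^sub>p)) b :> f\<^sub>i\<^sub>p (x + c *\<^sub>R e\<^sub>i + b *\<^sub>R e\<^sub>p)"
    if "0 \<le> b" "b \<le> r" for b
    using df\<^sub>i c that by auto
  from MVT2[OF r this] obtain d where d: "0 < d" "d < r"
    "f\<^sub>i (x + c *\<^sub>R e\<^sub>i + r *\<^sub>R e\<^sub>p) - f\<^sub>i (x + c *\<^sub>R e\<^sub>i) = r * f\<^sub>i\<^sub>p (x + c *\<^sub>R e\<^sub>i + d *\<^sub>R e\<^sub>p)"
    by auto
  show ?thesis
    by (rule that[of c d]) (use c d in \<open>auto simp: G_def power2_eq_square\<close>)
qed

lemma has_partial_symmetric: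
  fixes f :: "real^'n \<Rightarrow> real"
  assumes U: "open U" and x: "x \<in> U"
    and f\<^sub>i: "\<And>y. y \<in> U \<Longrightarrow> has_partial f i y (f\<^sub>i y)"
    and f\<^sub>p: "\<And>y. y \<in> U \<Longrightarrow> has_partial f p y (f\<^sub>p y)"
    and f\<^sub>i\<^sub>p: "\<And>y. y \<in> U \<Longrightarrow> has_partial f\<^sub>i p y (f\<^sub>i\<^sub>p y)"
    and f\<^sub>p\<^sub>i: "\<And>y. y \<in> U \<Longrightarrow> has_partial f\<^sub>p i y (f\<^sub>p\<^sub>i y)"
    and cont: "continuous_on U f\<^sub>i\<^sub>p" "continuous_on U f\<^sub>p\<^sub>i"
  shows "f\<^sub>i\<^sub>p x = f\<^sub>p\<^sub>i x"
proof (rule ccontr)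
  assume "f\<^sub>i\<^sub>p x \<noteq> f\<^sub>p\<^sub>i x"
  define \<epsilon> where "\<epsilon> = \<bar>f\<^sub>i\<^sub>p x - f\<^sub>p\<^sub>i x\<bar> / 2"
  have \<epsilon>: "\<epsilon> > 0"
    using \<open>f\<^sub>i\<^sub>p x \<noteq> f\<^sub>p\<^sub>i x\<close> by (simp add: \<epsilon>_def)
  have "(f\<^sub>i\<^sub>p \<longlongrightarrow> f\<^sub>i\<^sub>p x) (nhds x)" "(f\<^sub>p\<^sub>i \<longlongrightarrow> f\<^sub>p\<^sub>i x) (nhds x)"
    using cont U x by (simp_all add: continuous_on_eq_continuous_at isCont_def
        flip: tendsto_at_iff_tendsto_nhds)
  then have "\<forall>\<^sub>F y in nhds x. y \<in> U \<and> dist (f\<^sub>i\<^sub>p y) (f\<^sub>i\<^sub>p x) < \<epsilon> \<and> dist (f\<^sub>p\<^sub>i y) (f\<^sub>p\<^sub>i x) < \<epsilon>"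
    using \<epsilon> U x by (intro eventually_conj eventually_nhds_in_open tendstoD)
  then obtain \<delta> where \<delta>: "\<delta> > 0"
    and near: "\<And>y. dist y x < \<delta> \<Longrightarrow> y \<in> U \<and> dist (f\<^sub>i\<^sub>p y) (f\<^sub>i\<^sub>p x) < \<epsilon> \<and> dist (f\<^sub>p\<^sub>i y) (f\<^sub>p\<^sub>i x) < \<epsilon>"
    unfolding eventually_nhds_metric by blast
  define r where "r = \<delta> / 3"
  have r: "r > 0"
    using \<delta> by (simp add: r_def)
  have box: "dist (x + a *\<^sub>R axis k 1 + b *\<^sub>R axis l 1) x < \<delta>"
    if "\<bar>a\<bar> \<le> r" "\<bar>b\<bar> \<le> r" for a b k l
  proof -
    have "norm (a *\<^sub>R axis k (1::real) + b *\<^sub>R axis l 1) \<le> \<bar>a\<bar> + \<bar>b\<bar>"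
      using norm_triangle_ineq[of "a *\<^sub>R axis k (1::real)" "b *\<^sub>R axis l 1"] by simp
    then show ?thesis
      using that \<delta> by (simp add: dist_norm r_def add.assoc)
  qed
  obtain c d where cd: "\<bar>c\<bar> \<le> r" "\<bar>d\<bar> \<le> r"
    "f (x + r *\<^sub>R axis i 1 + r *\<^sub>R axis p 1) - f (x + r *\<^sub>R axis p 1) - f (x + r *\<^sub>R axis i 1) + f x
       = r\<^sup>2 * f\<^sub>i\<^sub>p (x + c *\<^sub>R axis i 1 + d *\<^sub>R axis p 1)"
    using second_difference_mvt[OF r _ f\<^sub>i f\<^sub>i\<^sub>p] box near by blast
  obtain c' d' where cd': "\<bar>c'\<bar> \<le> r" "\<bar>d'\<bar> \<le> r"
    "f (x + r *\<^sub>R axis p 1 + r *\<^sub>R axis i 1) - f (x + r *\<^sub>R axis i 1) - f (x + r *\<^sub>R axis p 1) + f x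
       = r\<^sup>2 * f\<^sub>p\<^sub>i (x + c' *\<^sub>R axis p 1 + d' *\<^sub>R axis i 1)"
    using second_difference_mvt[OF r _ f\<^sub>p f\<^sub>p\<^sub>i] box near by blast
  define y where "y = x + c *\<^sub>R axis i 1 + d *\<^sub>R axis p 1"
  define y' where "y' = x + c' *\<^sub>R axis p 1 + d' *\<^sub>R axis i 1"
  have "f\<^sub>i\<^sub>p y = f\<^sub>p\<^sub>i y'"
    using cd(3) cd'(3) r by (simp add: y_def y'_def algebra_simps)
  moreover have "\<bar>f\<^sub>i\<^sub>p y - f\<^sub>i\<^sub>p x\<bar> < \<epsilon>" "\<bar>f\<^sub>p\<^sub>i y' - f\<^sub>p\<^sub>i x\<bar> < \<epsilon>"
    using near box cd cd' unfolding y_def y'_def dist_real_def by blast+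
  ultimately show False
    unfolding \<epsilon>_def by (simp add: abs_less_iff abs_if split: if_splits)
qed

section \<open>The differentiated system\<close>

definition totally_symmetric :: "('n \<Rightarrow> 'n \<Rightarrow> 'n \<Rightarrow> real) \<Rightarrow> bool" where
  "totally_symmetric \<alpha> \<longleftrightarrow> (\<forall>i j k. \<alpha> i j k = \<alpha> i k j \<and> \<alpha> i j k = \<alpha> j i k \<and> \<alpha> i j k = \<alpha> j k i
      \<and> \<alpha> i j k = \<alpha> k i j \<and> \<alpha> i j k = \<alpha> k j i)"

text \<open>For totally symmetric \<open>\<alpha>\<close> this is \<open>\<Sum>\<^sub>j x\<^sub>j A\<^sub>j\<close>, the matrix \<open>M(x)\<close> above.\<close>

definition coeff_comb :: "('n::finite \<Rightarrow> 'n \<Rightarrow> 'n \<Rightarrow> real) \<Rightarrow> real^'n \<Rightarrow> real^'n^'n" where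
  "coeff_comb \<alpha> x = (\<chi> i k. \<Sum>j\<in>UNIV. \<alpha> i j k * x$j)"

lemma transpose_coeff_comb:
  assumes "totally_symmetric \<alpha>"
  shows "transpose (coeff_comb \<alpha> x) = coeff_comb \<alpha> x"
proof -
  have "\<alpha> a b c = \<alpha> c b a" for a b c
    using assms unfolding totally_symmetric_def by blast
  then show ?thesis
    by (simp add: transpose_def coeff_comb_def vec_eq_iff)
qed

lemma coeff_comb_add: "coeff_comb \<alpha> (x + y) = coeff_comb \<alpha> x + coeff_comb \<alpha> y"
  by (simp add: coeff_comb_def vec_eq_iff algebra_simps sum.distrib)

lemma coeff_comb_scaleR: "coeff_comb \<alpha> (c *\<^sub>R x) = c *\<^sub>R coeff_comb \<alpha> x"
  by (simp add: coeff_comb_def vec_eq_iff algebra_simps sum_distrib_left)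

lemma coeff_comb_0 [simp]: "coeff_comb \<alpha> 0 = 0"
  by (simp add: coeff_comb_def vec_eq_iff)

lemma coeff_comb_nth [simp]: "coeff_comb \<alpha> x $ i $ k = (\<Sum>j\<in>UNIV. \<alpha> i j k * x$j)"
  by (simp add: coeff_comb_def)

lemma coeff_comb_mult_vec: "(coeff_comb \<alpha> t *v v)$i = (\<Sum>j\<in>UNIV. \<Sum>k\<in>UNIV. \<alpha> i j k * t$j * v$k)"
proof -
  have "(coeff_comb \<alpha> t *v v)$i = (\<Sum>k\<in>UNIV. \<Sum>j\<in>UNIV. \<alpha> i j k * t$j * v$k)"
    by (simp add: coeff_comb_def matrix_vector_mult_def sum_distrib_right)
  also have "\<dots> = (\<Sum>j\<in>UNIV. \<Sum>k\<in>UNIV. \<alpha> i j k * t$j * v$k)"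
    by (rule sum.swap)
  finally show ?thesis .
qed

lemma coeff_comb_mult_entry:
  "(coeff_comb \<alpha> t ** B)$i$p = (\<Sum>j\<in>UNIV. \<Sum>k\<in>UNIV. \<alpha> i j k * t$j * B$k$p)"
proof -
  have "(coeff_comb \<alpha> t ** B)$i$p = (\<Sum>k\<in>UNIV. \<Sum>j\<in>UNIV. \<alpha> i j k * t$j * B$k$p)"
    by (simp add: coeff_comb_def matrix_matrix_mult_def sum_distrib_right)
  also have "\<dots> = (\<Sum>j\<in>UNIV. \<Sum>k\<in>UNIV. \<alpha> i j k * t$j * B$k$p)"
    by (rule sum.swap)
  finally show ?thesis .
qed

text \<open>Substituting \<open>G = e M(u) G + f e u\<close> twice into \<open>[M(G), M(u)] = 0\<close> and dividing by \<open>e\<close>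
  each time.\<close>

lemma commut_coeff_comb_expansion:
  assumes e: "e \<noteq> 0"
    and commute: "commut (coeff_comb \<alpha> G) (coeff_comb \<alpha> (e *\<^sub>R u)) = 0"
    and G: "G = coeff_comb \<alpha> (e *\<^sub>R u) *v G + f *\<^sub>R (e *\<^sub>R u)"
  shows "commut (coeff_comb \<alpha> (coeff_comb \<alpha> u *v (coeff_comb \<alpha> u *v G))) (coeff_comb \<alpha> u)
    + f *\<^sub>R commut (coeff_comb \<alpha> (coeff_comb \<alpha> u *v u)) (coeff_comb \<alpha> u) = 0"
proof -
  define M where "M = coeff_comb \<alpha> u"
  have G': "G = e *\<^sub>R (M *v G) + (f * e) *\<^sub>R u"
    using G by (simp add: M_def coeff_comb_scaleR scaleR_matrix_vector_assoc)
  have "commut (coeff_comb \<alpha> G) M = 0"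
    using commute e by (simp add: M_def coeff_comb_scaleR commut_scaleR_right)
  also have "coeff_comb \<alpha> G = e *\<^sub>R coeff_comb \<alpha> (M *v G) + (f * e) *\<^sub>R M"
    by (subst G') (simp add: M_def coeff_comb_add coeff_comb_scaleR)
  finally have "commut (coeff_comb \<alpha> (M *v G)) M = 0"
    using e by (simp add: commut_add_left commut_scaleR_left)
  also have "M *v G = e *\<^sub>R (M *v (M *v G)) + (f * e) *\<^sub>R (M *v u)"
    by (subst G') (simp add: matrix_vector_right_distrib matrix_vector_mult_scaleR)
  finally have "e *\<^sub>R (commut (coeff_comb \<alpha> (M *v (M *v G))) M + f *\<^sub>R commut (coeff_comb \<alpha> (M *v u)) M) = 0"
    by (simp add: coeff_comb_add coeff_comb_scaleR commut_add_left commut_scaleR_left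
        scaleR_add_right mult.commute)
  then show ?thesis
    using e by (simp add: M_def)
qed

lemma eventually_line_in_open:
  fixes t v :: "'a::real_normed_vector"
  assumes "open U" "t \<in> U"
  shows "\<forall>\<^sub>F s in nhds 0. t + s *\<^sub>R v \<in> U"
proof -
  have "isCont (\<lambda>s. t + s *\<^sub>R v) 0"
    by (intro continuous_intros)
  then have "((\<lambda>s. t + s *\<^sub>R v) \<longlongrightarrow> t) (nhds 0)"
    using tendsto_at_iff_tendsto_nhds[of "\<lambda>s. t + s *\<^sub>R v" 0] by (simp add: isCont_def)
  then show ?thesis
    using assms by (rule topological_tendstoD)
qed

lemma isCont_eq_0_if_eventually_0:
  fixes f :: "'a::{perfect_space, t2_space} \<Rightarrow> 'b::{t2_space, zero}"
  assumes "isCont f a" and "\<forall>\<^sub>F x in at a. f x = 0"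
  shows "f a = 0"
proof -
  have "(f \<longlongrightarrow> 0) (at a)"
    using assms(2) by (rule tendsto_eventually)
  with assms(1) show ?thesis
    unfolding isCont_def by (rule tendsto_unique[rotated]) simp
qed

locale pde_solution =
  fixes \<alpha> :: "'n::finite \<Rightarrow> 'n \<Rightarrow> 'n \<Rightarrow> real" and \<phi> :: "real^'n \<Rightarrow> real" and U :: "(real^'n) set"
    and g :: "'n \<Rightarrow> real^'n \<Rightarrow> real" and h :: "'n \<Rightarrow> 'n \<Rightarrow> real^'n \<Rightarrow> real"
  assumes symmetric: "totally_symmetric \<alpha>" and open_U: "open U"
    and has_partial_\<phi>: "\<And>i x. x \<in> U \<Longrightarrow> has_partial \<phi> i x (g i x)"
    and has_partial_g: "\<And>i j x. x \<in> U \<Longrightarrow> has_partial (g i) j x (h i j x)"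
    and continuous_\<phi>: "continuous_on U \<phi>"
    and continuous_g: "\<And>i. continuous_on U (g i)"
    and continuous_h: "\<And>i j. continuous_on U (h i j)"
    and pde: "\<And>i t. t \<in> U \<Longrightarrow> g i t = (\<Sum>j\<in>UNIV. \<Sum>k\<in>UNIV. \<alpha> i j k * t$j * g k t) + t$i * \<phi> t"
begin

definition grad :: "real^'n \<Rightarrow> real^'n" where
  "grad t = (\<chi> k. g k t)"

definition hess :: "real^'n \<Rightarrow> real^'n^'n" where
  "hess t = (\<chi> i p. h i p t)"

lemma grad_eq:
  assumes "t \<in> U"
  shows "grad t = coeff_comb \<alpha> t *v grad t + \<phi> t *\<^sub>R t"
proof -
  have "grad t $ i = (coeff_comb \<alpha> t *v grad t + \<phi> t *\<^sub>R t)$i" for i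
  proof -
    have "grad t $ i = (\<Sum>j\<in>UNIV. \<Sum>k\<in>UNIV. \<alpha> i j k * t$j * g k t) + t$i * \<phi> t"
      using pde[OF assms, of i] by (simp add: grad_def)
    also have "\<dots> = (coeff_comb \<alpha> t *v grad t + \<phi> t *\<^sub>R t)$i"
      by (simp add: grad_def coeff_comb_mult_vec mult.commute)
    finally show ?thesis .
  qed
  then show ?thesis
    unfolding vec_eq_iff by blast
qed

lemma grad_0:
  assumes "0 \<in> U"
  shows "grad 0 = 0"
  using grad_eq[OF assms] by simp

lemma hess_symmetric:
  assumes "t \<in> U"
  shows "transpose (hess t) = hess t"
  using has_partial_symmetric[OF open_U assms has_partial_\<phi> has_partial_\<phi> has_partial_g has_partial_g
      continuous_h continuous_h]
  by (simp add: transpose_def hess_def vec_eq_iff)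

lemma hess_entry_eq:
  assumes t: "t \<in> U"
  shows "h i p t = (\<Sum>k\<in>UNIV. \<alpha> i p k * g k t) + (\<Sum>j\<in>UNIV. \<Sum>k\<in>UNIV. \<alpha> i j k * t$j * h k p t)
    + axis p 1 $ i * \<phi> t + t$i * g p t"
proof -
  define e :: "real^'n" where "e = axis p 1"
  have g_line: "DERIV (\<lambda>s. g k (t + s *\<^sub>R e)) 0 :> h k p t" for k
    using has_partial_g[OF t] by (simp add: has_partial_def e_def)
  have \<phi>_line: "DERIV (\<lambda>s. \<phi> (t + s *\<^sub>R e)) 0 :> g p t"
    using has_partial_\<phi>[OF t] by (simp add: has_partial_def e_def)
  have "\<forall>\<^sub>F s in nhds 0. g i (t + s *\<^sub>R e)
      = (\<Sum>j\<in>UNIV. \<Sum>k\<in>UNIV. \<alpha> i j k * (t$j + s * e$j) * g k (t + s *\<^sub>R e))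
        + (t$i + s * e$i) * \<phi> (t + s *\<^sub>R e)"
    using eventually_line_in_open[OF open_U t] by eventually_elim (subst pde, simp_all)
  then have "DERIV (\<lambda>s. g i (t + s *\<^sub>R e)) 0 :>
      (\<Sum>j\<in>UNIV. \<Sum>k\<in>UNIV. \<alpha> i j k * (e$j * g k t + t$j * h k p t)) + e$i * \<phi> t + t$i * g p t"
    apply (rule DERIV_cong_ev[OF refl _ refl, THEN iffD2])
    apply (rule DERIV_cong)
     apply (rule derivative_eq_intros g_line \<phi>_line refl)+
    apply (simp add: algebra_simps)
    done
  moreover have "(\<Sum>j\<in>UNIV. \<Sum>k\<in>UNIV. \<alpha> i j k * (e$j * g k t)) = (\<Sum>k\<in>UNIV. \<alpha> i p k * g k t)"
  proof -
    have "(\<Sum>j\<in>UNIV. \<Sum>k\<in>UNIV. \<alpha> i j k * (e$j * g k t)) = (\<Sum>j\<in>UNIV. e$j * (\<Sum>k\<in>UNIV. \<alpha> i j k * g k t))"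
      by (simp add: sum_distrib_left mult_ac)
    then show ?thesis
      by (simp add: e_def axis_def mult_if_delta)
  qed
  ultimately have "DERIV (\<lambda>s. g i (t + s *\<^sub>R e)) 0 :> (\<Sum>k\<in>UNIV. \<alpha> i p k * g k t)
      + (\<Sum>j\<in>UNIV. \<Sum>k\<in>UNIV. \<alpha> i j k * t$j * h k p t) + e$i * \<phi> t + t$i * g p t"
    by (simp add: distrib_left sum.distrib mult.assoc)
  with g_line[of i] show ?thesis
    unfolding e_def by (rule DERIV_unique)
qed

lemma hess_eq:
  assumes t: "t \<in> U"
  shows "hess t = coeff_comb \<alpha> (grad t) + coeff_comb \<alpha> t ** hess t + \<phi> t *\<^sub>R mat 1 + outer t (grad t)"
proof -
  have "\<alpha> i j p = \<alpha> i p j" for i j p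
    using symmetric unfolding totally_symmetric_def by blast
  then have "hess t $ i $ p
      = (coeff_comb \<alpha> (grad t) + coeff_comb \<alpha> t ** hess t + \<phi> t *\<^sub>R mat 1 + outer t (grad t)) $ i $ p"
    for i p
    using hess_entry_eq[OF t, of i p]
    by (simp add: hess_def grad_def coeff_comb_mult_entry mat_def outer_def axis_def)
  then show ?thesis
    unfolding vec_eq_iff by blast
qed

lemma grad_commute:
  assumes "t \<in> U"
  shows "commut (coeff_comb \<alpha> (grad t)) (coeff_comb \<alpha> t) = 0"
  by (rule commut_eq_0_if_symmetric[OF transpose_coeff_comb[OF symmetric] transpose_coeff_comb[OF symmetric]
        hess_symmetric[OF assms] hess_eq[OF assms] grad_eq[OF assms]])

lemma isCont_along_line:
  assumes "0 \<in> U"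
  shows "isCont (\<lambda>e. grad (e *\<^sub>R u)) 0" and "isCont (\<lambda>e. \<phi> (e *\<^sub>R u)) 0"
proof -
  have "continuous_on U grad"
    unfolding grad_def by (intro continuous_on_vec_lambda continuous_g)
  then have "isCont grad 0" "isCont \<phi> 0"
    using open_U assms continuous_\<phi> by (simp_all add: continuous_on_eq_continuous_at)
  moreover have line: "isCont (\<lambda>e. e *\<^sub>R u) 0"
    by (intro continuous_intros)
  ultimately show "isCont (\<lambda>e. grad (e *\<^sub>R u)) 0" "isCont (\<lambda>e. \<phi> (e *\<^sub>R u)) 0"
    using isCont_o2[OF line, of grad] isCont_o2[OF line, of \<phi>] by simp_all
qed

lemma commut_coeff_comb_square:
  assumes "0 \<in> U" and "\<phi> 0 \<noteq> 0"
  shows "commut (coeff_comb \<alpha> (coeff_comb \<alpha> u *v u)) (coeff_comb \<alpha> u) = 0"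
proof -
  define M where "M = coeff_comb \<alpha> u"
  define L where "L v = commut (coeff_comb \<alpha> (M *v (M *v v))) M" for v
  define B where "B = commut (coeff_comb \<alpha> (M *v u)) M"
  define F where "F e = L (grad (e *\<^sub>R u)) + \<phi> (e *\<^sub>R u) *\<^sub>R B" for e
  have "F e = 0" if "e \<noteq> 0" "e *\<^sub>R u \<in> U" for e
    unfolding F_def L_def B_def M_def
    using that(1) grad_commute[OF that(2)] grad_eq[OF that(2)] by (rule commut_coeff_comb_expansion)
  moreover have "\<forall>\<^sub>F e in nhds 0. e *\<^sub>R u \<in> U"
    using eventually_line_in_open[OF open_U assms(1), of u] by simp
  ultimately have "\<forall>\<^sub>F e in at 0. F e = 0"
    unfolding eventually_at_filter by (auto elim: eventually_mono)
  moreover have "linear L"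
    by (rule linearI) (simp_all add: L_def matrix_vector_right_distrib matrix_vector_mult_scaleR
        coeff_comb_add coeff_comb_scaleR commut_add_left commut_scaleR_left)
  then have "isCont (\<lambda>e. L (grad (e *\<^sub>R u))) 0"
    using isCont_o2[OF isCont_along_line(1)[OF assms(1), of u], of L]
    by (simp add: linear_continuous_at linear_conv_bounded_linear)
  then have "isCont F 0"
    unfolding F_def using isCont_along_line(2)[OF assms(1), of u] by (intro continuous_intros)
  ultimately have "F 0 = 0"
    by (rule isCont_eq_0_if_eventually_0[rotated])
  then show ?thesis
    using assms \<open>linear L\<close> by (simp add: F_def B_def M_def grad_0 linear_0)
qed

end

section \<open>The matrix exponential\<close>

lemma mat_pow_0 [simp]: "mat_pow A 0 = mat 1"
  by (simp add: mat_pow_def)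

lemma mat_pow_Suc [simp]: "mat_pow A (Suc n) = A ** mat_pow A n"
  by (simp add: mat_pow_def)

lemma mat_pow_scaleR: "mat_pow (c *\<^sub>R A) n = c ^ n *\<^sub>R mat_pow A n"
  by (induction n) (simp_all add: matrix_scalar_ac scalar_matrix_assoc[symmetric])

lemma abs_mat_pow_nth_le:
  fixes A :: "real^'n^'n"
  shows "\<bar>mat_pow A n $ r $ q\<bar> \<le> (\<Sum>r\<in>UNIV. \<Sum>q\<in>UNIV. \<bar>A$r$q\<bar>) ^ n"
proof (induction n arbitrary: r q)
  case 0
  then show ?case
    by (simp add: mat_def)
next
  case (Suc n)
  define K where "K = (\<Sum>r\<in>UNIV. \<Sum>q\<in>UNIV. \<bar>A$r$q\<bar>)"
  have "\<bar>mat_pow A (Suc n) $ r $ q\<bar> = \<bar>\<Sum>p\<in>UNIV. A$r$p * mat_pow A n $ p $ q\<bar>"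
    by (simp add: matrix_matrix_mult_def)
  also have "\<dots> \<le> (\<Sum>p\<in>UNIV. \<bar>A$r$p\<bar> * K ^ n)"
    by (rule order_trans[OF sum_abs])
      (auto intro!: sum_mono mult_left_mono Suc[unfolded K_def[symmetric]] simp: abs_mult)
  also have "\<dots> = (\<Sum>p\<in>UNIV. \<bar>A$r$p\<bar>) * K ^ n"
    by (simp add: sum_distrib_right)
  also have "\<dots> \<le> K * K ^ n"
    unfolding K_def by (intro mult_right_mono member_le_sum zero_le_power sum_nonneg) auto
  finally show ?case
    by (simp add: K_def)
qed

lemma norm_le_sum_abs_nth: "norm (A :: real^'n^'m) \<le> (\<Sum>r\<in>UNIV. \<Sum>q\<in>UNIV. \<bar>A$r$q\<bar>)"
proof -
  have "norm A \<le> (\<Sum>r\<in>UNIV. norm (A$r))"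
    unfolding norm_vec_def by (rule L2_set_le_sum) simp
  also have "\<dots> \<le> (\<Sum>r\<in>UNIV. \<Sum>q\<in>UNIV. \<bar>A$r$q\<bar>)"
    by (intro sum_mono norm_le_l1_cart)
  finally show ?thesis .
qed

lemma summable_mat_exp: "summable (\<lambda>n. (1 / fact n) *\<^sub>R mat_pow (A :: real^'n^'n) n)"
proof (rule summable_comparison_test)
  define K where "K = (\<Sum>r\<in>UNIV. \<Sum>q\<in>UNIV. \<bar>A$r$q\<bar>)"
  define D where "D = real CARD('n) ^ 2"
  show "summable (\<lambda>n. D * (K ^ n / fact n))"
    using summable_exp[of K] by (intro summable_mult) (simp add: divide_inverse mult.commute)
  have "norm (mat_pow A n) \<le> D * K ^ n" for n
  proof -
    have "norm (mat_pow A n) \<le> (\<Sum>r\<in>(UNIV::'n set). \<Sum>q\<in>(UNIV::'n set). K ^ n)"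
      unfolding K_def by (rule order_trans[OF norm_le_sum_abs_nth]) (intro sum_mono abs_mat_pow_nth_le)
    then show ?thesis
      by (simp add: D_def power2_eq_square)
  qed
  then show "\<exists>N. \<forall>n\<ge>N. norm ((1 / fact n) *\<^sub>R mat_pow A n) \<le> D * (K ^ n / fact n)"
    by (auto simp: divide_right_mono)
qed

lemma mat_exp_nth_sums:
  fixes B C :: "real^'n^'n"
  shows "(\<lambda>n. ((B ** mat_pow C n) *v \<xi>) $ k / fact n * s ^ n) sums ((B ** mat_exp (s *\<^sub>R C)) *v \<xi>) $ k"
proof -
  have "bounded_linear (\<lambda>A. ((B ** A) *v \<xi>) $ k)"
    unfolding linear_conv_bounded_linear[symmetric]
    by (rule linearI) (simp_all add: matrix_add_ldistrib matrix_scalar_ac scalar_matrix_assoc[symmetric]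
        matrix_vector_mult_add_rdistrib scaleR_matrix_vector_assoc[symmetric])
  from bounded_linear.sums[OF this summable_sums[OF summable_mat_exp[of "s *\<^sub>R C"]]]
  show ?thesis
    by (simp add: mat_exp_def mat_pow_scaleR matrix_scalar_ac scalar_matrix_assoc[symmetric]
        scaleR_matrix_vector_assoc[symmetric] mult.commute)
qed

lemma has_field_derivative_mat_exp_nth:
  fixes C :: "real^'n^'n"
  shows "DERIV (\<lambda>s. (mat_exp (s *\<^sub>R C) *v \<xi>) $ k) s :> (C *v (mat_exp (s *\<^sub>R C) *v \<xi>)) $ k"
proof -
  define c where "c n = (mat_pow C n *v \<xi>) $ k / fact n" for n
  have c_sums: "(\<lambda>n. c n * s ^ n) sums (mat_exp (s *\<^sub>R C) *v \<xi>) $ k" for s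
    using mat_exp_nth_sums[of "mat 1" C \<xi> k s] by (simp add: c_def)
  have "DERIV (\<lambda>s. \<Sum>n. c n * s ^ n) s :> (\<Sum>n. diffs c n * s ^ n)"
    by (rule termdiffs_strong_converges_everywhere) (use c_sums sums_summable in blast)
  moreover have "diffs c n = ((C ** mat_pow C n) *v \<xi>) $ k / fact n" for n
    by (simp add: diffs_def c_def fact_Suc divide_simps)
  then have "(\<lambda>n. diffs c n * s ^ n) sums (C *v (mat_exp (s *\<^sub>R C) *v \<xi>)) $ k"
    using mat_exp_nth_sums[of C C \<xi> k s] by (simp add: matrix_vector_mul_assoc)
  ultimately show ?thesis
    using c_sums by (simp add: sums_iff)
qed

lemma mat_exp_0: "mat_exp (0 :: real^'n^'n) = mat 1"
proof -
  have "(\<lambda>n. (1 / fact n) *\<^sub>R mat_pow (0 :: real^'n^'n) n) = (\<lambda>n. if n = 0 then mat 1 else 0)"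
  proof
    fix n
    show "(1 / fact n) *\<^sub>R mat_pow (0 :: real^'n^'n) n = (if n = 0 then mat 1 else 0)"
      by (cases n) simp_all
  qed
  then show ?thesis
    using sums_single[of 0 "\<lambda>_. mat 1 :: real^'n^'n"] by (simp add: mat_exp_def sums_iff)
qed

section \<open>Invariance of the cubic form\<close>

definition cubic_polar :: "('n::finite \<Rightarrow> 'n \<Rightarrow> 'n \<Rightarrow> real) \<Rightarrow> real^'n \<Rightarrow> real^'n \<Rightarrow> real^'n \<Rightarrow> real"
  where "cubic_polar \<alpha> a b c = (\<Sum>i\<in>UNIV. \<Sum>j\<in>UNIV. \<Sum>k\<in>UNIV. \<alpha> i j k * a$i * b$j * c$k)"

lemma cubic_polar_swap12:
  assumes "totally_symmetric \<alpha>"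
  shows "cubic_polar \<alpha> a b c = cubic_polar \<alpha> b a c"
proof -
  have "\<alpha> i j k = \<alpha> j i k" for i j k
    using assms unfolding totally_symmetric_def by blast
  moreover have "cubic_polar \<alpha> a b c = (\<Sum>j\<in>UNIV. \<Sum>i\<in>UNIV. \<Sum>k\<in>UNIV. \<alpha> i j k * a$i * b$j * c$k)"
    unfolding cubic_polar_def by (rule sum.swap)
  ultimately show ?thesis
    unfolding cubic_polar_def by (simp add: mult_ac)
qed

lemma cubic_polar_swap23:
  assumes "totally_symmetric \<alpha>"
  shows "cubic_polar \<alpha> a b c = cubic_polar \<alpha> a c b"
proof -
  have "\<alpha> i j k = \<alpha> i k j" for i j k
    using assms unfolding totally_symmetric_def by blast
  moreover have "cubic_polar \<alpha> a b c = (\<Sum>i\<in>UNIV. \<Sum>k\<in>UNIV. \<Sum>j\<in>UNIV. \<alpha> i j k * a$i * b$j * c$k)"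
    unfolding cubic_polar_def by (intro sum.cong refl sum.swap)
  ultimately show ?thesis
    unfolding cubic_polar_def by (simp add: mult_ac)
qed

lemma cubic_polar_eq_inner: "cubic_polar \<alpha> v y y = inner v (coeff_comb \<alpha> y *v y)"
  by (simp add: cubic_polar_def inner_vec_def coeff_comb_mult_vec sum_distrib_left mult_ac)

lemma cubic_form_flow_invariant:
  assumes sym: "totally_symmetric \<alpha>"
    and tangent: "\<And>t. inner (coeff_comb \<alpha> t *v t) (C *v t) = 0"
  shows "cubic_form \<alpha> (mat_exp (s *\<^sub>R C) *v \<xi>) = cubic_form \<alpha> \<xi>"
proof -
  define y where "y s = mat_exp (s *\<^sub>R C) *v \<xi>" for s
  have "DERIV (\<lambda>s. cubic_form \<alpha> (y s)) s :> 0" for s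
  proof -
    have "DERIV (\<lambda>s. cubic_form \<alpha> (y s)) s :>
        cubic_polar \<alpha> (C *v y s) (y s) (y s) + cubic_polar \<alpha> (y s) (C *v y s) (y s)
          + cubic_polar \<alpha> (y s) (y s) (C *v y s)"
      unfolding cubic_form_def y_def
      apply (rule DERIV_cong)
       apply (rule derivative_eq_intros has_field_derivative_mat_exp_nth refl)+
      apply (simp add: cubic_polar_def sum.distrib[symmetric] algebra_simps)
      done
    moreover have "cubic_polar \<alpha> (C *v y s) (y s) (y s) + cubic_polar \<alpha> (y s) (C *v y s) (y s)
        + cubic_polar \<alpha> (y s) (y s) (C *v y s) = 3 * inner (C *v y s) (coeff_comb \<alpha> (y s) *v y s)"
      using cubic_polar_swap12[OF sym, of "y s" "C *v y s"] cubic_polar_swap23[OF sym, of "y s" "y s"]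
      by (simp add: cubic_polar_eq_inner)
    ultimately show ?thesis
      using tangent by (simp add: inner_commute)
  qed
  then have "cubic_form \<alpha> (y s) = cubic_form \<alpha> (y 0)"
    by (blast intro: DERIV_isconst_all[where f = "\<lambda>s. cubic_form \<alpha> (y s)"])
  then show ?thesis
    by (simp add: y_def mat_exp_0)
qed

lemma inner_coeff_mat_mult:
  assumes "totally_symmetric \<alpha>"
  shows "inner w ((coeff_mat \<alpha> i ** coeff_mat \<alpha> j) *v t) = (coeff_comb \<alpha> w ** coeff_comb \<alpha> t) $ i $ j"
proof -
  have sym_j: "\<alpha> q s j = \<alpha> j q s" for q s
    using assms unfolding totally_symmetric_def by blast
  have "inner w ((coeff_mat \<alpha> i ** coeff_mat \<alpha> j) *v t)
      = (\<Sum>a\<in>UNIV. \<Sum>s\<in>UNIV. \<Sum>q\<in>UNIV. w$a * \<alpha> i a q * \<alpha> j q s * t$s)"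
    by (simp add: inner_vec_def matrix_vector_mult_def matrix_matrix_mult_def coeff_mat_def
        sum_distrib_left sum_distrib_right mult_ac)
  also have "\<dots> = (\<Sum>a\<in>UNIV. \<Sum>q\<in>UNIV. \<Sum>s\<in>UNIV. w$a * \<alpha> i a q * \<alpha> q s j * t$s)"
    unfolding sym_j by (rule sum.cong[OF refl], rule sum.swap)
  also have "\<dots> = (\<Sum>q\<in>UNIV. \<Sum>a\<in>UNIV. \<Sum>s\<in>UNIV. w$a * \<alpha> i a q * \<alpha> q s j * t$s)"
    by (rule sum.swap)
  also have "\<dots> = (coeff_comb \<alpha> w ** coeff_comb \<alpha> t) $ i $ j"
    by (simp add: matrix_matrix_mult_def sum_distrib_left sum_distrib_right mult_ac)
  finally show ?thesis .
qed

lemma inner_commut_coeff_mat: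
  assumes sym: "totally_symmetric \<alpha>"
  shows "inner w (commut (coeff_mat \<alpha> i) (coeff_mat \<alpha> j) *v t)
    = commut (coeff_comb \<alpha> w) (coeff_comb \<alpha> t) $ i $ j"
proof -
  have "(coeff_comb \<alpha> w ** coeff_comb \<alpha> t) $ j $ i = transpose (coeff_comb \<alpha> w ** coeff_comb \<alpha> t) $ i $ j"
    by (simp add: transpose_def)
  also have "\<dots> = (coeff_comb \<alpha> t ** coeff_comb \<alpha> w) $ i $ j"
    by (simp add: matrix_transpose_mul transpose_coeff_comb[OF sym])
  finally have "(coeff_comb \<alpha> w ** coeff_comb \<alpha> t) $ j $ i = (coeff_comb \<alpha> t ** coeff_comb \<alpha> w) $ i $ j" .
  then show ?thesis
    by (simp add: commut_def matrix_vector_mult_diff_rdistrib inner_diff_right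
        inner_coeff_mat_mult[OF sym])
qed

theorem mainTheorem9:
  fixes \<alpha> :: "'n::finite \<Rightarrow> 'n \<Rightarrow> 'n \<Rightarrow> real"
    and \<phi> :: "real^'n \<Rightarrow> real"
    and U :: "(real^'n) set"
  assumes sym: "\<And>i j k. \<alpha> i j k = \<alpha> i k j \<and> \<alpha> i j k = \<alpha> j i k \<and> \<alpha> i j k = \<alpha> j k i
                      \<and> \<alpha> i j k = \<alpha> k i j \<and> \<alpha> i j k = \<alpha> k j i"
    and U0: "0 \<in> U" and C2: "C2_on U \<phi>"
    and pde: "\<And>i t. t \<in> U \<Longrightarrow>
        partial \<phi> i t = (\<Sum>j\<in>UNIV. \<Sum>k\<in>UNIV. \<alpha> i j k * t$j * partial \<phi> k t) + t$i * \<phi> t"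
    and nz: "\<phi> 0 \<noteq> 0"
  shows "\<forall>i j. \<forall>\<xi>::real^'n. \<forall>s::real.
           cubic_form \<alpha> (mat_exp (s *\<^sub>R commut (coeff_mat \<alpha> i) (coeff_mat \<alpha> j)) *v \<xi>) = cubic_form \<alpha> \<xi>"
proof -
  have sym': "totally_symmetric \<alpha>"
    unfolding totally_symmetric_def using sym by blast
  from C2 obtain g h where "open U" "continuous_on U \<phi>"
    and g: "\<forall>i. \<forall>x\<in>U. has_partial \<phi> i x (g i x)" "\<forall>i. continuous_on U (g i)"
    and h: "\<forall>i j. \<forall>x\<in>U. has_partial (g i) j x (h i j x)" "\<forall>i j. continuous_on U (h i j)"
    unfolding C2_on_def by blast
  have "partial \<phi> i x = g i x" if "x \<in> U" for i x
    using g(1) that by (simp add: partial_eq)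
  then have "g i t = (\<Sum>j\<in>UNIV. \<Sum>k\<in>UNIV. \<alpha> i j k * t$j * g k t) + t$i * \<phi> t" if "t \<in> U" for i t
    using pde[OF that, of i] that by simp
  with sym' \<open>open U\<close> \<open>continuous_on U \<phi>\<close> g h interpret pde_solution \<alpha> \<phi> U g h
    by unfold_locales auto
  have "inner (coeff_comb \<alpha> t *v t) (commut (coeff_mat \<alpha> i) (coeff_mat \<alpha> j) *v t) = 0" for i j t
    using commut_coeff_comb_square[OF U0 nz] by (simp add: inner_commut_coeff_mat[OF sym'])
  then show ?thesis
    using cubic_form_flow_invariant[OF sym'] by blast
qed

end
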